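(* Let $X$ be a $T_0$ space, $x\in X$ and $(x_i)_{i\in I}$ a net in $X$. Consider: (1) $(x_i)_{i\in I}$ $GSI_2$-converges to $x$. (2) For every $F\in X^{(<\omega)}$ with $F\ll_{I_2}x$ and every open set $U$ of $X$ with $F\subseteq U$, $x_i\in U$ eventually. Then (1) implies (2), and if $X$ is $QI_2$-continuous, then (1) and (2) are equivalent.
   Context: For a $T_0$ space $X$, the specialization order is $x\le y$ iff $x\in \mathrm{cl}\{y\}$; $\uparrow A=\{x: a\le x\text{ for some } a\in A\}$, $\uparrow x=\uparrow\{x\}$; $A^\uparrow$, $A^\downarrow$ are the sets of upper and lower bounds of $A$, and $A^\delta=(A^\uparrow)^\downarrow$. A nonempty subset $A$ of a space is irreducible if whenever $A\subseteq F_1\cup F_2$ with $F_1,F_2$ closed, $A\subseteq F_1$ or $A\subseteq F_2$. $X^{(<\omega)}$ is the set of nonempty finite subsets of $X$. $P_S(X)$ is the set of nonempty compact saturated (upper) subsets of $X$ with the upper Vietoris topology, basis $\{\square U: U\text{ open}\}$, $\square U=\{Q: Q\subseteq U\}$. A net is eventually in $U$ if from some index on all its terms lie in $U$. For $A\subseteq X$, $x\in X$, $A\ll_{I_2}x$ means: for every irreducible $D\subseteq X$ with $x\in D^\delta$, $A\cap\mathrm{cl}D\ne\emptyset$. For $x\in X$, $w(x)=\{\uparrow F: F\in X^{(<\omega)}, F\ll_{I_2}x\}$. $X$ is $QI_2$-continuous if for every $x$, $w(x)$ is irreducible in $P_S(X)$ and $\uparrow x=\bigcap w(x)$. A net $(x_i)_{i\in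 I}$ $GSI_2$-converges to $x$ if there exists $\mathcal F\subseteq X^{(<\omega)}$ with $\{\uparrow G: G\in\mathcal F\}$ irreducible in $P_S(X)$ such that (i) for every open $U$, if $\uparrow G\subseteq U$ for some $G\in\mathcal F$ then $x_i\in U$ eventually, and (ii) $\bigcap_{G\in\mathcal F}\uparrow G\subseteq\uparrow x$. *)

theory Defs
  imports "HOL-Analysis.Analysis"
begin

definition spec_le :: "'a topology \<Rightarrow> 'a \<Rightarrow> 'a \<Rightarrow> bool" where
  "spec_le X x y \<longleftrightarrow> x \<in> topspace X \<and> y \<in> topspace X \<and> x \<in> X closure_of {y}"

definition up_set :: "'a topology \<Rightarrow> 'a set \<Rightarrow> 'a set" where
  "up_set X A = {x \<in> topspace X. \<exists>a\<in>A. spec_le X a x}"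

definition upper_bounds :: "'a topology \<Rightarrow> 'a set \<Rightarrow> 'a set" where
  "upper_bounds X A = {y \<in> topspace X. \<forall>a\<in>A. spec_le X a y}"

definition lower_bounds :: "'a topology \<Rightarrow> 'a set \<Rightarrow> 'a set" where
  "lower_bounds X A = {y \<in> topspace X. \<forall>a\<in>A. spec_le X y a}"

definition delta_cut :: "'a topology \<Rightarrow> 'a set \<Rightarrow> 'a set" where
  "delta_cut X A = lower_bounds X (upper_bounds X A)"

definition irreducible_in :: "'a topology \<Rightarrow> 'a set \<Rightarrow> bool" where
  "irreducible_in X A \<longleftrightarrow> A \<noteq> {} \<and> A \<subseteq> topspace X \<and>
     (\<forall>F1 F2. closedin X F1 \<and> closedin X F2 \<and> A \<subseteq> F1 \<union> F2 \<longrightarrow> A \<subseteq> F1 \<or> A \<subseteq> F2)"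

definition fin_subsets :: "'a topology \<Rightarrow> 'a set set" where
  "fin_subsets X = {F. finite F \<and> F \<noteq> {} \<and> F \<subseteq> topspace X}"

definition PS_carrier :: "'a topology \<Rightarrow> 'a set set" where
  "PS_carrier X = {Q. Q \<noteq> {} \<and> compactin X Q \<and> up_set X Q = Q}"

definition box_set :: "'a topology \<Rightarrow> 'a set \<Rightarrow> 'a set set" where
  "box_set X U = {Q \<in> PS_carrier X. Q \<subseteq> U}"

definition PS :: "'a topology \<Rightarrow> 'a set topology" where
  "PS X = topology_generated_by {box_set X U | U. openin X U}"

definition way_below_I2 :: "'a topology \<Rightarrow> 'a set \<Rightarrow> 'a \<Rightarrow> bool" where
  "way_below_I2 X A x \<longleftrightarrow>
     (\<forall>D. irreducible_in X D \<and> x \<in> delta_cut X D \<longrightarrow> A \<inter> (X closure_of D) \<noteq> {})"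

definition w_I2 :: "'a topology \<Rightarrow> 'a \<Rightarrow> 'a set set" where
  "w_I2 X x = {up_set X F | F. F \<in> fin_subsets X \<and> way_below_I2 X F x}"

definition QI2_continuous :: "'a topology \<Rightarrow> bool" where
  "QI2_continuous X \<longleftrightarrow>
     (\<forall>x\<in>topspace X. irreducible_in (PS X) (w_I2 X x) \<and> up_set X {x} = \<Inter>(w_I2 X x))"

definition directed_index :: "'i set \<Rightarrow> ('i \<Rightarrow> 'i \<Rightarrow> bool) \<Rightarrow> bool" where
  "directed_index I le \<longleftrightarrow> I \<noteq> {} \<and> (\<forall>i\<in>I. le i i) \<and>
     (\<forall>i\<in>I. \<forall>j\<in>I. \<forall>k\<in>I. le i j \<and> le j k \<longrightarrow> le i k) \<and>
     (\<forall>i\<in>I. \<forall>j\<in>I. \<exists>k\<in>I. le i k \<and> le j k)"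

definition eventually_in :: "'i set \<Rightarrow> ('i \<Rightarrow> 'i \<Rightarrow> bool) \<Rightarrow> ('i \<Rightarrow> 'a) \<Rightarrow> 'a set \<Rightarrow> bool" where
  "eventually_in I le xn U \<longleftrightarrow> (\<exists>i0\<in>I. \<forall>i\<in>I. le i0 i \<longrightarrow> xn i \<in> U)"

definition GSI2_converges ::
    "'a topology \<Rightarrow> 'i set \<Rightarrow> ('i \<Rightarrow> 'i \<Rightarrow> bool) \<Rightarrow> ('i \<Rightarrow> 'a) \<Rightarrow> 'a \<Rightarrow> bool" where
  "GSI2_converges X I le xn x \<longleftrightarrow>
     (\<exists>\<F>. \<F> \<subseteq> fin_subsets X \<and> irreducible_in (PS X) (up_set X ` \<F>) \<and>
        (\<forall>U. openin X U \<longrightarrow> (\<exists>G\<in>\<F>. up_set X G \<subseteq> U) \<longrightarrow> eventually_in I le xn U) \<and>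
        \<Inter>(up_set X ` \<F>) \<subseteq> up_set X {x})"

end

theory Submission
  imports Defs
begin

text \<open>The implication (1) \<Longrightarrow> (2) rests on a topological Rudin lemma: if an irreducible family
  \<open>K\<close> of compact saturated sets has no member inside the open set \<open>U\<close>, then a maximal open
  set containing \<open>U\<close> but no member of \<open>K\<close> has an irreducible closed complement \<open>A\<close>
  meeting every member of \<open>K\<close>. For a \<open>GSI\<^sub>2\<close>-witness \<open>\<F>\<close>, every upper bound of
  \<open>A\<close> lies above some point of each \<open>\<up>G\<close>, hence in \<open>\<Inter>\<up>G \<subseteq> \<up>x\<close>, so \<open>x \<in> A\<^sup>\<delta>\<close>.
  Thus \<open>F \<ll>\<^sub>I\<^sub>2 x\<close> forces \<open>F\<close> to meet \<open>A\<close>, so \<open>F \<subseteq> U\<close> is impossible unless some \<open>\<up>G\<close>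
  already lies in \<open>U\<close>. Conversely, under \<open>QI\<^sub>2\<close>-continuity the family of all finite
  \<open>F \<ll>\<^sub>I\<^sub>2 x\<close> is itself a witness of \<open>GSI\<^sub>2\<close>-convergence.\<close>

lemma spec_le_trans:
  assumes "spec_le X a b" "spec_le X b c"
  shows "spec_le X a c"
proof -
  have "X closure_of {b} \<subseteq> X closure_of {c}"
    using assms(2) by (simp add: closure_of_minimal spec_le_def)
  then show ?thesis
    using assms by (auto simp: spec_le_def)
qed

lemma subset_up_set:
  assumes "G \<subseteq> topspace X"
  shows "G \<subseteq> up_set X G"
  using assms closure_of_subset[of "{g}" X for g] by (auto simp: up_set_def spec_le_def)

lemma topspace_PS: "topspace (PS X) = PS_carrier X"
proof -
  have "\<Union>{box_set X U | U. openin X U} = PS_carrier X"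
  proof
    show "PS_carrier X \<subseteq> \<Union>{box_set X U | U. openin X U}"
    proof
      fix Q assume "Q \<in> PS_carrier X"
      then have "Q \<in> box_set X (topspace X)"
        by (auto simp: box_set_def PS_carrier_def compactin_subset_topspace)
      then show "Q \<in> \<Union>{box_set X U | U. openin X U}"
        by blast
    qed
  qed (auto simp: box_set_def)
  then show ?thesis
    by (simp add: PS_def)
qed

lemma openin_PS_box_set: "openin X U \<Longrightarrow> openin (PS X) (box_set X U)"
  unfolding PS_def by (rule topology_generated_by_Basis) blast

lemma box_set_Int: "box_set X U \<inter> box_set X V = box_set X (U \<inter> V)"
  by (auto simp: box_set_def)

lemma irreducible_in_meets_open_Int:
  assumes "irreducible_in T A" "openin T U" "openin T V" "U \<inter> A \<noteq> {}" "V \<inter> A \<noteq> {}"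
  shows "U \<inter> V \<inter> A \<noteq> {}"
proof
  assume "U \<inter> V \<inter> A = {}"
  moreover have "A \<subseteq> topspace T"
    using assms(1) by (simp add: irreducible_in_def)
  ultimately have "A \<subseteq> (topspace T - U) \<union> (topspace T - V)"
    by blast
  then have "A \<subseteq> topspace T - U \<or> A \<subseteq> topspace T - V"
    using assms(1-3) unfolding irreducible_in_def by blast
  then show False
    using assms(4,5) by blast
qed

lemma compactin_subset_chain_member:
  assumes "compactin X K" "K \<subseteq> \<Union>\<C>" "\<C> \<noteq> {}" "subset.chain \<A> \<C>" "\<And>W. W \<in> \<C> \<Longrightarrow> openin X W"
  obtains W where "W \<in> \<C>" "K \<subseteq> W"
proof -
  obtain \<F> where \<F>: "finite \<F>" "\<F> \<subseteq> \<C>" "K \<subseteq> \<Union>\<F>"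
    using assms(1,2,5) unfolding compactin_def by meson
  show ?thesis
  proof (cases "\<F> = {}")
    case True
    then show ?thesis
      using that assms(3) \<F>(3) by blast
  next
    case False
    have "subset.chain \<A> \<F>"
      using assms(4) \<F>(2) unfolding subset.chain_def by blast
    then have "\<Union>\<F> \<in> \<F>"
      using Union_in_chain \<F>(1) False by blast
    then show ?thesis
      using that \<F> by blast
  qed
qed

lemma exists_maximal_open_avoiding:
  assumes "\<And>k. k \<in> \<K> \<Longrightarrow> compactin X k" "openin X U" "\<forall>k\<in>\<K>. \<not> k \<subseteq> U"
  defines "\<A> \<equiv> {W. openin X W \<and> U \<subseteq> W \<and> (\<forall>k\<in>\<K>. \<not> k \<subseteq> W)}"
  shows "\<exists>M\<in>\<A>. \<forall>W\<in>\<A>. M \<subseteq> W \<longrightarrow> W = M"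
proof (rule subset_Zorn_nonempty)
  show "\<A> \<noteq> {}"
    using assms(2,3) by (auto simp: \<A>_def)
  fix \<C> assume "\<C> \<noteq> {}" and chain: "subset.chain \<A> \<C>"
  then have "\<C> \<subseteq> \<A>"
    by (simp add: subset.chain_def)
  have "\<not> k \<subseteq> \<Union>\<C>" if k: "k \<in> \<K>" for k
  proof
    assume "k \<subseteq> \<Union>\<C>"
    then obtain W where "W \<in> \<C>" "k \<subseteq> W"
      using compactin_subset_chain_member[OF assms(1)[OF k] _ \<open>\<C> \<noteq> {}\<close> chain] \<open>\<C> \<subseteq> \<A>\<close>
      by (auto simp: \<A>_def)
    then show False
      using k \<open>\<C> \<subseteq> \<A>\<close> by (auto simp: \<A>_def)
  qed
  then show "\<Union>\<C> \<in> \<A>"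
    using \<open>\<C> \<subseteq> \<A>\<close> \<open>\<C> \<noteq> {}\<close> by (auto simp: \<A>_def)
qed

lemma topological_rudin_lemma:
  assumes irr: "irreducible_in (PS X) \<K>" and "openin X U" and avoid: "\<forall>k\<in>\<K>. \<not> k \<subseteq> U"
  shows "\<exists>A. irreducible_in X A \<and> closedin X A \<and> A \<inter> U = {} \<and> (\<forall>k\<in>\<K>. A \<inter> k \<noteq> {})"
proof -
  have \<K>_PS: "\<K> \<subseteq> PS_carrier X"
    using irr by (simp add: irreducible_in_def topspace_PS)
  then have compact: "\<And>k. k \<in> \<K> \<Longrightarrow> compactin X k"
    by (auto simp: PS_carrier_def)
  obtain M where "openin X M" "U \<subseteq> M" and M_avoids: "\<forall>k\<in>\<K>. \<not> k \<subseteq> M"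
    and maximal: "\<And>W. openin X W \<Longrightarrow> M \<subseteq> W \<Longrightarrow> \<forall>k\<in>\<K>. \<not> k \<subseteq> W \<Longrightarrow> W = M"
    using exists_maximal_open_avoiding[OF compact \<open>openin X U\<close> avoid] by auto
  define A where "A = topspace X - M"
  have meets: "\<forall>k\<in>\<K>. A \<inter> k \<noteq> {}"
    using M_avoids compact compactin_subset_topspace by (fastforce simp: A_def)
  have "irreducible_in X A"
    unfolding irreducible_in_def
  proof (intro conjI allI impI)
    show "A \<noteq> {}"
      using meets irr by (auto simp: irreducible_in_def)
    fix B1 B2 assume B: "closedin X B1 \<and> closedin X B2 \<and> A \<subseteq> B1 \<union> B2"
    have member_in_enlargement: "\<exists>k\<in>\<K>. k \<subseteq> M \<union> (topspace X - B)" if "closedin X B" "\<not> A \<subseteq> B" for B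
      using maximal[of "M \<union> (topspace X - B)"] \<open>openin X M\<close> that by (auto simp: A_def)
    show "A \<subseteq> B1 \<or> A \<subseteq> B2"
    proof (rule ccontr)
      assume "\<not> (A \<subseteq> B1 \<or> A \<subseteq> B2)"
      then obtain k1 k2 where "k1 \<in> \<K>" "k1 \<subseteq> M \<union> (topspace X - B1)"
        and "k2 \<in> \<K>" "k2 \<subseteq> M \<union> (topspace X - B2)"
        using member_in_enlargement B by meson
      then have "box_set X (M \<union> (topspace X - B1)) \<inter> box_set X (M \<union> (topspace X - B2)) \<inter> \<K> \<noteq> {}"
        using \<K>_PS \<open>openin X M\<close> B
        by (intro irreducible_in_meets_open_Int[OF irr] openin_PS_box_set) (auto simp: box_set_def)
      moreover have "(M \<union> (topspace X - B1)) \<inter> (M \<union> (topspace X - B2)) \<inter> topspace X = M"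
        using B \<open>openin X M\<close> openin_subset by (fastforce simp: A_def)
      ultimately obtain k where "k \<in> \<K>" "k \<subseteq> M"
        using \<K>_PS compact compactin_subset_topspace by (fastforce simp: box_set_Int box_set_def)
      then show False
        using M_avoids by blast
    qed
  qed (simp add: A_def)
  moreover have "closedin X A"
    using \<open>openin X M\<close> by (simp add: A_def closedin_diff)
  ultimately show ?thesis
    using meets \<open>U \<subseteq> M\<close> by (auto simp: A_def)
qed

lemma upper_bounds_subset_Inter_up_set:
  assumes "\<forall>G\<in>\<F>. A \<inter> up_set X G \<noteq> {}"
  shows "upper_bounds X A \<subseteq> \<Inter>(up_set X ` \<F>)"
proof
  fix y assume y: "y \<in> upper_bounds X A"
  show "y \<in> \<Inter>(up_set X ` \<F>)"
  proof (rule InterI)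
    fix k assume "k \<in> up_set X ` \<F>"
    then obtain G where "G \<in> \<F>" "k = up_set X G"
      by blast
    then obtain a g where "a \<in> A" "g \<in> G" "spec_le X g a"
      using assms unfolding up_set_def by blast
    then have "spec_le X g y"
      using y spec_le_trans[of X g a y] by (simp add: upper_bounds_def)
    then show "y \<in> k"
      using \<open>k = up_set X G\<close> \<open>g \<in> G\<close> y by (auto simp: up_set_def upper_bounds_def)
  qed
qed

lemma GSI2_converges_imp_eventually_in:
  assumes conv: "GSI2_converges X I le xn x" and "x \<in> topspace X"
    and "way_below_I2 X F x" and "openin X U" "F \<subseteq> U"
  shows "eventually_in I le xn U"
proof -
  obtain \<F> where irr: "irreducible_in (PS X) (up_set X ` \<F>)"
    and tail: "\<forall>U. openin X U \<longrightarrow> (\<exists>G\<in>\<F>. up_set X G \<subseteq> U) \<longrightarrow> eventually_in I le xn U"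
    and Inter_below: "\<Inter>(up_set X ` \<F>) \<subseteq> up_set X {x}"
    using conv unfolding GSI2_converges_def by blast
  show ?thesis
  proof (cases "\<exists>G\<in>\<F>. up_set X G \<subseteq> U")
    case True
    then show ?thesis
      using tail \<open>openin X U\<close> by blast
  next
    case False
    then have "\<forall>k\<in>up_set X ` \<F>. \<not> k \<subseteq> U"
      by blast
    then obtain A where A: "irreducible_in X A" "closedin X A" "A \<inter> U = {}"
      and "\<forall>k\<in>up_set X ` \<F>. A \<inter> k \<noteq> {}"
      using topological_rudin_lemma[OF irr \<open>openin X U\<close>] by blast
    then have meets: "\<forall>G\<in>\<F>. A \<inter> up_set X G \<noteq> {}"
      by blast
    have "upper_bounds X A \<subseteq> up_set X {x}"
      using upper_bounds_subset_Inter_up_set[OF meets] Inter_below by blast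
    then have "x \<in> delta_cut X A"
      using \<open>x \<in> topspace X\<close> by (auto simp: delta_cut_def lower_bounds_def up_set_def)
    then have "F \<inter> X closure_of A \<noteq> {}"
      using \<open>way_below_I2 X F x\<close> A(1) unfolding way_below_I2_def by blast
    then have "F \<inter> A \<noteq> {}"
      using A(2) by (simp add: closure_of_closedin)
    then show ?thesis
      using A(3) \<open>F \<subseteq> U\<close> by blast
  qed
qed

lemma QI2_continuous_imp_GSI2_converges:
  assumes "QI2_continuous X" "x \<in> topspace X"
    and eventually: "\<forall>F\<in>fin_subsets X. way_below_I2 X F x \<longrightarrow>
                       (\<forall>U. openin X U \<and> F \<subseteq> U \<longrightarrow> eventually_in I le xn U)"
  shows "GSI2_converges X I le xn x"
  unfolding GSI2_converges_def
proof (intro exI[of _ "{F \<in> fin_subsets X. way_below_I2 X F x}"] conjI allI impI)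
  have "up_set X ` {F \<in> fin_subsets X. way_below_I2 X F x} = w_I2 X x"
    by (auto simp: w_I2_def)
  then show "irreducible_in (PS X) (up_set X ` {F \<in> fin_subsets X. way_below_I2 X F x})"
    and "\<Inter>(up_set X ` {F \<in> fin_subsets X. way_below_I2 X F x}) \<subseteq> up_set X {x}"
    using assms(1,2) by (simp_all add: QI2_continuous_def)
  fix U assume "openin X U" "\<exists>G\<in>{F \<in> fin_subsets X. way_below_I2 X F x}. up_set X G \<subseteq> U"
  then obtain G where "G \<in> fin_subsets X" "way_below_I2 X G x" "up_set X G \<subseteq> U"
    by blast
  moreover have "G \<subseteq> up_set X G"
    using \<open>G \<in> fin_subsets X\<close> by (intro subset_up_set) (simp add: fin_subsets_def)
  ultimately show "eventually_in I le xn U"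
    using eventually \<open>openin X U\<close> by blast
qed auto

theorem proposition4p6:
  fixes X :: "'a topology" and I :: "'i set" and le :: "'i \<Rightarrow> 'i \<Rightarrow> bool"
    and xn :: "'i \<Rightarrow> 'a" and x :: 'a
  assumes "t0_space X" and "x \<in> topspace X"
    and "directed_index I le" and "\<forall>i\<in>I. xn i \<in> topspace X"
  shows "(GSI2_converges X I le xn x \<longrightarrow>
           (\<forall>F\<in>fin_subsets X. way_below_I2 X F x \<longrightarrow>
              (\<forall>U. openin X U \<and> F \<subseteq> U \<longrightarrow> eventually_in I le xn U)))
       \<and> (QI2_continuous X \<longrightarrow>
           (GSI2_converges X I le xn x \<longleftrightarrow>
           (\<forall>F\<in>fin_subsets X. way_below_I2 X F x \<longrightarrow>
              (\<forall>U. openin X U \<and> F \<subseteq> U \<longrightarrow> eventually_in I le xn U))))"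
proof -
  \<comment> \<open>only \<open>x \<in> topspace X\<close> is needed; the \<open>T\<^sub>0\<close>, directedness and range hypotheses are not\<close>
  let ?eventually = "\<forall>F\<in>fin_subsets X. way_below_I2 X F x \<longrightarrow>
                      (\<forall>U. openin X U \<and> F \<subseteq> U \<longrightarrow> eventually_in I le xn U)"
  have "GSI2_converges X I le xn x \<Longrightarrow> ?eventually"
    using GSI2_converges_imp_eventually_in[OF _ assms(2)] by blast
  moreover have "QI2_continuous X \<Longrightarrow> ?eventually \<Longrightarrow> GSI2_converges X I le xn x"
    by (rule QI2_continuous_imp_GSI2_converges[OF _ assms(2)])
  ultimately show ?thesis
    by blast
qed

end
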